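(* Let $V=\{1,\dots,p\}$ and let $F:2^V\to\mathbb{R}$ be submodular, nondecreasing, with $F(\varnothing)=0$ and $F(\{k\})>0$ for all $k\in V$. Let $\Omega(w)=f(|w|)$, where $f$ is the Lovász extension of $F$. Then the extreme points of the unit ball $\{w\in\mathbb{R}^p:\Omega(w)\leqslant 1\}$ are exactly the vectors $\frac{1}{F(A)}s$ with $s\in\{-1,0,1\}^p$, $\mathrm{Supp}(s)=A$, and $A$ a stable inseparable set.
   Context: For $w\in\mathbb{R}^p$, $|w|$ is the vector of absolute values of its components and $\mathrm{Supp}(w)=\{j: w_j\neq0\}$. The Lovász extension $f:\mathbb{R}_+^p\to\mathbb{R}$: for $w\in\mathbb{R}_+^p$ with $w_{j_1}\geqslant\cdots\geqslant w_{j_p}\geqslant 0$, $f(w)=\sum_{k=1}^p w_{j_k}[F(\{j_1,\dots,j_k\})-F(\{j_1,\dots,j_{k-1}\})]$. A set $A\subset V$ is stable if every strict superset $B\supsetneq A$ satisfies $F(B)>F(A)$. A nonempty set $A$ is separable if there is a partition of $A$ into $k\geqslant2$ nonempty sets $B_1,\dots,B_k$ with $F(A)=\sum_i F(B_i)$, and inseparable otherwise. *)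

theory Defs
  imports "HOL-Analysis.Analysis" "HOL-Library.Disjoint_Sets"
begin

text \<open>Ground set V = UNIV of a finite index type 'n (so p = CARD('n)); vectors in R^p are real^'n.\<close>

definition submodular :: "('n::finite set \<Rightarrow> real) \<Rightarrow> bool" where
  "submodular F \<longleftrightarrow> (\<forall>A B. F (A \<union> B) + F (A \<inter> B) \<le> F A + F B)"

definition nondecreasing_setfun :: "('n::finite set \<Rightarrow> real) \<Rightarrow> bool" where
  "nondecreasing_setfun F \<longleftrightarrow> (\<forall>A B. A \<subseteq> B \<longrightarrow> F A \<le> F B)"

definition sorting_order :: "real^'n::finite \<Rightarrow> (nat \<Rightarrow> 'n) \<Rightarrow> bool" where
  "sorting_order w \<sigma> \<longleftrightarrow> bij_betw \<sigma> {..<CARD('n)} UNIV \<and>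
     (\<forall>i j. i \<le> j \<longrightarrow> j < CARD('n) \<longrightarrow> w $ (\<sigma> j) \<le> w $ (\<sigma> i))"

text \<open>Lovasz extension (meant for nonnegative w).\<close>
definition lovasz_ext :: "('n::finite set \<Rightarrow> real) \<Rightarrow> real^'n \<Rightarrow> real" where
  "lovasz_ext F w = (let \<sigma> = (SOME \<sigma>. sorting_order w \<sigma>) in
     (\<Sum>k<CARD('n). w $ (\<sigma> k) * (F (\<sigma> ` {..k}) - F (\<sigma> ` {..<k}))))"

definition vabs :: "real^'n::finite \<Rightarrow> real^'n" where
  "vabs w = (\<chi> i. \<bar>w $ i\<bar>)"

definition supp :: "real^'n::finite \<Rightarrow> 'n set" where
  "supp w = {j. w $ j \<noteq> 0}"

definition stable_set :: "('n::finite set \<Rightarrow> real) \<Rightarrow> 'n set \<Rightarrow> bool" where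
  "stable_set F A \<longleftrightarrow> (\<forall>B. A \<subset> B \<longrightarrow> F B > F A)"

definition separable_set :: "('n::finite set \<Rightarrow> real) \<Rightarrow> 'n set \<Rightarrow> bool" where
  "separable_set F A \<longleftrightarrow> A \<noteq> {} \<and>
     (\<exists>P. partition_on A P \<and> card P \<ge> 2 \<and> F A = (\<Sum>B\<in>P. F B))"

definition inseparable_set :: "('n::finite set \<Rightarrow> real) \<Rightarrow> 'n set \<Rightarrow> bool" where
  "inseparable_set F A \<longleftrightarrow> A \<noteq> {} \<and> \<not> separable_set F A"

end

theory Submission
  imports Defs
begin

text \<open>For nonnegative \<open>w\<close> the Lov\'asz extension is the support function of the submodular
  polyhedron \<open>P(F) = {s. \<forall>B. s(B) \<le> F B}\<close>, the maximum being attained at the greedy vector of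
  any order sorting \<open>w\<close>; in particular it is additive on comonotone vectors. At an extreme point
  \<open>x\<close> of the unit ball, splitting \<open>\<bar>x\<bar>\<close> into two comonotone parts would write \<open>x\<close> as a proper
  convex combination, so \<open>\<bar>x\<bar>\<close> is constant, equal to \<open>1 / F A\<close>, on its support \<open>A\<close>; a superset
  with the same value of \<open>F\<close>, or a splitting \<open>F A = F T + F (A - T)\<close>, would again make \<open>x\<close> a
  midpoint. Conversely, if \<open>A\<close> is stable, every coordinate is strictly positive for some greedy
  vector \<open>g\<close> with \<open>g(A) = F A\<close>, and \<open>g \<bullet> \<bar>\<cdot>\<bar> \<le> 1\<close> on the ball forces every decomposition
  \<open>x = (1 - t) y + t z\<close> to satisfy \<open>\<bar>y\<bar> = \<bar>z\<bar> = \<bar>x\<bar>\<close>; here inseparability of \<open>A\<close> enters by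
  comparing the greedy vectors that list the top level of \<open>\<bar>y\<bar>\<close> first and last.\<close>

lemma submodular_marginal_antimono:
  assumes "submodular F" "X \<subseteq> Y" "m \<notin> Y"
  shows "F (insert m Y) - F Y \<le> F (insert m X) - F X"
proof -
  have "F (insert m X \<union> Y) + F (insert m X \<inter> Y) \<le> F (insert m X) + F Y"
    using assms(1) unfolding submodular_def by blast
  moreover have "insert m X \<union> Y = insert m Y" "insert m X \<inter> Y = X"
    using assms(2,3) by auto
  ultimately show ?thesis by simp
qed

lemma nondecreasing_setfun_nonneg:
  assumes "nondecreasing_setfun F" "F {} = 0"
  shows "0 \<le> F B"
  using assms unfolding nondecreasing_setfun_def by (metis empty_subsetI)

lemma submodular_Union_le_sum:
  assumes "submodular F" "nondecreasing_setfun F" "F {} = 0" "finite P"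
  shows "F (\<Union>P) \<le> (\<Sum>B\<in>P. F B)"
  using assms(4)
proof (induction P rule: finite_induct)
  case (insert B P)
  have "F (B \<union> \<Union>P) + F (B \<inter> \<Union>P) \<le> F B + F (\<Union>P)"
    using assms(1) unfolding submodular_def by blast
  moreover have "0 \<le> F (B \<inter> \<Union>P)" by (rule nondecreasing_setfun_nonneg[OF assms(2,3)])
  ultimately have "F (B \<union> \<Union>P) \<le> F B + (\<Sum>B\<in>P. F B)" using insert.IH by linarith
  then show ?case using insert.hyps by simp
qed (simp add: assms(3))

lemma separable_setI:
  assumes "T \<noteq> {}" "T \<subset> A" "F A = F T + F (A - T)"
  shows "separable_set F A"
  unfolding separable_set_def
proof (intro conjI exI)
  have ne: "T \<noteq> A - T" using assms(1,2) by blast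
  show "A \<noteq> {}" using assms(1,2) by blast
  show "partition_on A {T, A - T}"
    using assms(1,2) by (intro partition_onI) (auto simp: disjnt_def)
  show "2 \<le> card {T, A - T}" using ne by simp
  show "F A = (\<Sum>B\<in>{T, A - T}. F B)" using ne assms(3) by simp
qed

lemma separable_setD:
  assumes "submodular F" "nondecreasing_setfun F" "F {} = 0" "separable_set F A"
  obtains T where "T \<noteq> {}" "T \<subset> A" "F A = F T + F (A - T)"
proof -
  obtain P where P: "partition_on A P" "2 \<le> card P" "F A = (\<Sum>B\<in>P. F B)"
    using assms(4) unfolding separable_set_def by blast
  note A = partition_onD1[OF P(1)] and disj = partition_onD2[OF P(1)]
    and nonempty = partition_onD3[OF P(1)]
  have "finite P" using P(2) card.infinite by fastforce
  have "\<not> card P \<le> Suc 0" using P(2) by simp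
  then obtain T C where TP: "T \<in> P" and C: "C \<in> P" "C \<noteq> T"
    using card_le_Suc0_iff_eq[OF \<open>finite P\<close>] by blast
  obtain c where "c \<in> C" using nonempty C(1) by (metis ex_in_conv)
  moreover have "C \<inter> T = {}" using disjointD[OF disj C(1) TP C(2)] .
  ultimately have "c \<in> A - T" using A C(1) by blast
  moreover have "T \<subseteq> A" "T \<noteq> {}" using A TP nonempty by auto
  ultimately have T: "T \<noteq> {}" "T \<subset> A" by auto
  have "A - T = \<Union>(P - {T})"
  proof (intro equalityI subsetI)
    fix x assume "x \<in> A - T"
    then show "x \<in> \<Union>(P - {T})" using A by blast
  next
    fix x assume "x \<in> \<Union>(P - {T})"
    then obtain B where "B \<in> P" "B \<noteq> T" "x \<in> B" by blast
    then show "x \<in> A - T" using A disjointD[OF disj \<open>B \<in> P\<close> TP] by blast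
  qed
  then have "F (A - T) \<le> (\<Sum>B\<in>P - {T}. F B)"
    using submodular_Union_le_sum[OF assms(1-3) finite_Diff[OF \<open>finite P\<close>]] by simp
  moreover have "F A = F T + (\<Sum>B\<in>P - {T}. F B)"
    using P(3) TP \<open>finite P\<close> by (simp add: sum.remove)
  moreover have "F A \<le> F T + F (A - T)"
  proof -
    have "F (T \<union> (A - T)) + F (T \<inter> (A - T)) \<le> F T + F (A - T)"
      using assms(1) unfolding submodular_def by blast
    moreover have "T \<union> (A - T) = A" "T \<inter> (A - T) = {}" using T(2) by auto
    ultimately show ?thesis using assms(3) by simp
  qed
  ultimately have "F A = F T + F (A - T)" by linarith
  with T show ?thesis by (rule that)
qed

section \<open>Greedy vectors of the submodular polyhedron\<close>

definition submodular_polyhedron :: "('n::finite set \<Rightarrow> real) \<Rightarrow> (real^'n) set" where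
  "submodular_polyhedron F = {s. \<forall>B. sum (($) s) B \<le> F B}"

definition greedy_vector :: "('n::finite set \<Rightarrow> real) \<Rightarrow> ('n \<Rightarrow> real) \<Rightarrow> real^'n" where
  "greedy_vector F \<kappa> = (\<chi> i. F {j. \<kappa> i \<le> \<kappa> j} - F {j. \<kappa> i < \<kappa> j})"

definition upper_set :: "('n \<Rightarrow> real) \<Rightarrow> 'n set \<Rightarrow> bool" where
  "upper_set \<kappa> U \<longleftrightarrow> (\<forall>i\<in>U. \<forall>j. \<kappa> i < \<kappa> j \<longrightarrow> j \<in> U)"

lemma greedy_vector_nth:
  assumes "inj \<kappa>"
  shows "greedy_vector F \<kappa> $ i = F (insert i {j. \<kappa> i < \<kappa> j}) - F {j. \<kappa> i < \<kappa> j}"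
proof -
  have "{j. \<kappa> i \<le> \<kappa> j} = insert i {j. \<kappa> i < \<kappa> j}"
    using assms by (auto simp: inj_def less_le)
  then show ?thesis by (simp add: greedy_vector_def)
qed

lemma greedy_vector_nonneg:
  assumes "nondecreasing_setfun F"
  shows "0 \<le> greedy_vector F \<kappa> $ i"
  using assms unfolding greedy_vector_def nondecreasing_setfun_def by (simp add: subset_eq)

lemma greedy_vector_mono:
  assumes "submodular F" "inj \<kappa>" "inj \<kappa>'"
    and "{j. \<kappa>' i < \<kappa>' j} \<subseteq> {j. \<kappa> i < \<kappa> j}"
  shows "greedy_vector F \<kappa> $ i \<le> greedy_vector F \<kappa>' $ i"
  using submodular_marginal_antimono[OF assms(1,4)]
  by (simp add: greedy_vector_nth[OF assms(2)] greedy_vector_nth[OF assms(3)])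

text \<open>Both sums are computed by adding the elements of a set in decreasing order of \<open>\<kappa>\<close>; the
  elements already added are then contained in the strict upper set of the new one.\<close>

lemma greedy_vector_in_submodular_polyhedron:
  fixes F :: "'n::finite set \<Rightarrow> real"
  assumes "submodular F" "F {} = 0" "inj \<kappa>"
  shows "greedy_vector F \<kappa> \<in> submodular_polyhedron F"
  unfolding submodular_polyhedron_def
proof (intro CollectI allI)
  fix B :: "'n set"
  show "sum (($) (greedy_vector F \<kappa>)) B \<le> F B"
    using finite[of B]
  proof (induction B rule: finite_ranking_induct[where f = "\<lambda>i. - \<kappa> i"])
    case (insert i S)
    show ?case
    proof (cases "i \<in> S")
      case False
      have "S \<subseteq> {j. \<kappa> i < \<kappa> j}"
      proof
        fix j assume "j \<in> S"
        then have "\<kappa> i \<le> \<kappa> j" "\<kappa> j \<noteq> \<kappa> i"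
          using insert.hyps(2) False injD[OF \<open>inj \<kappa>\<close>] by force+
        then show "j \<in> {j. \<kappa> i < \<kappa> j}" by simp
      qed
      then have "greedy_vector F \<kappa> $ i \<le> F (insert i S) - F S"
        using submodular_marginal_antimono[OF assms(1)] greedy_vector_nth[OF assms(3)] by force
      then show ?thesis using False insert.IH by simp
    qed (use insert.IH in \<open>simp add: insert_absorb\<close>)
  qed (simp add: assms(2))
qed

lemma sum_greedy_vector_upper_set:
  assumes "F {} = 0" "inj \<kappa>" "upper_set \<kappa> U"
  shows "sum (($) (greedy_vector F \<kappa>)) U = F U"
  using finite[of U] assms(3)
proof (induction U rule: finite_ranking_induct[where f = "\<lambda>i. - \<kappa> i"])
  case (insert i S)
  show ?case
  proof (cases "i \<in> S")
    case False
    have above: "\<kappa> i < \<kappa> j" if "j \<in> S" for j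
    proof -
      have "\<kappa> i \<le> \<kappa> j" "\<kappa> j \<noteq> \<kappa> i"
        using insert.hyps(2)[OF that] that False injD[OF \<open>inj \<kappa>\<close>] by force+
      then show ?thesis by simp
    qed
    have "{j. \<kappa> i < \<kappa> j} = S"
      using insert.prems above unfolding upper_set_def by blast
    moreover have "upper_set \<kappa> S"
      unfolding upper_set_def
    proof (intro ballI allI impI)
      fix a b assume "a \<in> S" "\<kappa> a < \<kappa> b"
      then have "b \<in> insert i S" "\<kappa> i < \<kappa> b"
        using insert.prems above[of a] unfolding upper_set_def by auto
      then show "b \<in> S" by auto
    qed
    ultimately show ?thesis
      using False insert.IH greedy_vector_nth[OF assms(2), of F i] by simp
  qed (use insert in \<open>simp add: insert_absorb\<close>)
qed (simp add: assms(1))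

lemma zero_in_submodular_polyhedron:
  assumes "nondecreasing_setfun F" "F {} = 0"
  shows "0 \<in> submodular_polyhedron F"
  using nondecreasing_setfun_nonneg[OF assms] by (simp add: submodular_polyhedron_def)

lemma singleton_in_submodular_polyhedron:
  assumes "nondecreasing_setfun F" "F {} = 0"
  shows "(\<chi> i. if i = k then F {k} else 0) \<in> submodular_polyhedron F"
  using assms nondecreasing_setfun_nonneg[OF assms]
  by (auto simp: submodular_polyhedron_def nondecreasing_setfun_def sum.delta)

lemma sorting_order_bij:
  fixes w :: "real^'n::finite"
  shows "sorting_order w \<sigma> \<Longrightarrow> bij_betw \<sigma> {..<CARD('n)} UNIV"
  by (simp add: sorting_order_def)

lemma sorting_order_exists: "\<exists>\<sigma>. sorting_order (w :: real^'n::finite) \<sigma>"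
proof -
  obtain xs :: "'n list" where xs: "set xs = UNIV" "distinct xs"
    using finite_distinct_list[of "UNIV :: 'n set"] by auto
  define ys where "ys = sort_key (\<lambda>i. - w $ i) xs"
  have ys: "set ys = UNIV" "distinct ys" using xs by (simp_all add: ys_def)
  then have len: "length ys = CARD('n)" using distinct_card by fastforce
  have "bij_betw ((!) ys) {..<CARD('n)} UNIV"
    using bij_betw_nth[OF ys(2)] len ys(1) by simp
  moreover have "w $ (ys ! j) \<le> w $ (ys ! i)" if "i \<le> j" "j < CARD('n)" for i j
    using sorted_nth_mono[OF sorted_sort_key[of "\<lambda>i. - w $ i" xs], of i j] that len
    by (simp add: ys_def[symmetric])
  ultimately show ?thesis unfolding sorting_order_def by blast
qed

lemma sorting_order_map:
  assumes "sorting_order w \<sigma>" "mono f"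
  shows "sorting_order (\<chi> i. f (w $ i)) \<sigma>"
  using assms by (auto simp: sorting_order_def mono_def)

definition rank_key :: "(nat \<Rightarrow> 'n::finite) \<Rightarrow> 'n \<Rightarrow> real" where
  "rank_key \<sigma> i = - real (inv_into {..<CARD('n)} \<sigma> i)"

lemma rank_key_nth:
  fixes \<sigma> :: "nat \<Rightarrow> 'n::finite"
  assumes "bij_betw \<sigma> {..<CARD('n)} UNIV" "k < CARD('n)"
  shows "rank_key \<sigma> (\<sigma> k) = - real k"
  using assms by (simp add: rank_key_def bij_betw_inv_into_left)

lemma rank_key_surj:
  fixes \<sigma> :: "nat \<Rightarrow> 'n::finite"
  assumes "bij_betw \<sigma> {..<CARD('n)} UNIV"
  obtains k where "k < CARD('n)" "i = \<sigma> k"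
  using assms by (metis UNIV_I bij_betw_iff_bijections lessThan_iff)

lemma rank_key_inj:
  fixes \<sigma> :: "nat \<Rightarrow> 'n::finite"
  assumes "bij_betw \<sigma> {..<CARD('n)} UNIV"
  shows "inj (rank_key \<sigma>)"
  using assms by (intro injI) (metis of_nat_eq_iff neg_equal_iff_equal rank_key_nth rank_key_surj)

lemma rank_key_greater:
  fixes \<sigma> :: "nat \<Rightarrow> 'n::finite"
  assumes "bij_betw \<sigma> {..<CARD('n)} UNIV" "k < CARD('n)"
  shows "{j. rank_key \<sigma> (\<sigma> k) < rank_key \<sigma> j} = \<sigma> ` {..<k}"
proof (intro equalityI subsetI)
  fix j assume "j \<in> {j. rank_key \<sigma> (\<sigma> k) < rank_key \<sigma> j}"
  moreover obtain l where "l < CARD('n)" "j = \<sigma> l" using rank_key_surj[OF assms(1)] .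
  ultimately show "j \<in> \<sigma> ` {..<k}" using assms by (simp add: rank_key_nth)
qed (use assms in \<open>auto simp: rank_key_nth\<close>)

lemma upper_set_rank_key_prefix:
  fixes \<sigma> :: "nat \<Rightarrow> 'n::finite"
  assumes "bij_betw \<sigma> {..<CARD('n)} UNIV" "k \<le> CARD('n)"
  shows "upper_set (rank_key \<sigma>) (\<sigma> ` {..<k})"
  unfolding upper_set_def
proof (intro ballI allI impI)
  fix i j assume "i \<in> \<sigma> ` {..<k}" "rank_key \<sigma> i < rank_key \<sigma> j"
  then obtain m where "m < k" "i = \<sigma> m" "rank_key \<sigma> (\<sigma> m) < rank_key \<sigma> j" by auto
  moreover have "m < CARD('n)" using \<open>m < k\<close> assms(2) by simp
  ultimately have "j \<in> \<sigma> ` {..<m}" using rank_key_greater[OF assms(1)] by blast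
  then show "j \<in> \<sigma> ` {..<k}" using \<open>m < k\<close> by auto
qed

lemma upper_set_rank_key_superlevel:
  fixes v :: "real^'n::finite"
  assumes "sorting_order v \<sigma>"
  shows "upper_set (rank_key \<sigma>) {i. \<theta> \<le> v $ i}"
  unfolding upper_set_def
proof (intro ballI allI impI)
  have bij: "bij_betw \<sigma> {..<CARD('n)} UNIV" using sorting_order_bij[OF assms] .
  fix i j assume "i \<in> {i. \<theta> \<le> v $ i}" "rank_key \<sigma> i < rank_key \<sigma> j"
  moreover obtain k where k: "k < CARD('n)" "i = \<sigma> k" using rank_key_surj[OF bij] .
  moreover obtain l where l: "l < CARD('n)" "j = \<sigma> l" using rank_key_surj[OF bij] .
  ultimately have "l \<le> k" "\<theta> \<le> v $ \<sigma> k" by (simp_all add: rank_key_nth[OF bij])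
  then show "j \<in> {i. \<theta> \<le> v $ i}"
    using assms k l unfolding sorting_order_def by fastforce
qed

lemma greedy_vector_rank_key:
  fixes \<sigma> :: "nat \<Rightarrow> 'n::finite"
  assumes "bij_betw \<sigma> {..<CARD('n)} UNIV" "k < CARD('n)"
  shows "greedy_vector F (rank_key \<sigma>) $ \<sigma> k = F (\<sigma> ` {..k}) - F (\<sigma> ` {..<k})"
  using greedy_vector_nth[OF rank_key_inj[OF assms(1)]] rank_key_greater[OF assms]
  by (simp add: lessThan_Suc_atMost[symmetric] lessThan_Suc)

section \<open>The Lov\'asz extension as a support function\<close>

lemma sum_summation_by_parts:
  fixes G H :: "nat \<Rightarrow> real"
  shows "(\<Sum>k<n. G k * (H (Suc k) - H k)) =
    (\<Sum>k<n. (G k - G (Suc k)) * H (Suc k)) + G n * H n - G 0 * H 0"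
  by (induction n) (simp_all add: algebra_simps)

text \<open>Layer-cake decomposition of the pairing along the order \<open>\<sigma>\<close>, with the convention
  \<open>w $ \<sigma> CARD('n) = 0\<close>.\<close>

lemma inner_eq_sum_prefix_sums:
  fixes \<sigma> :: "nat \<Rightarrow> 'n::finite" and t w :: "real^'n"
  assumes "bij_betw \<sigma> {..<CARD('n)} UNIV"
  defines "G \<equiv> \<lambda>k. if k < CARD('n) then w $ \<sigma> k else 0"
  shows "t \<bullet> w = (\<Sum>k<CARD('n). (G k - G (Suc k)) * sum (($) t) (\<sigma> ` {..<Suc k}))"
proof -
  define T where "T k = sum (($) t) (\<sigma> ` {..<k})" for k
  have T_Suc: "T (Suc k) - T k = t $ \<sigma> k" if "k < CARD('n)" for k
  proof -
    have "\<sigma> k \<notin> \<sigma> ` {..<k}"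
      using that by (auto simp: inj_on_eq_iff[OF bij_betw_imp_inj_on[OF assms(1)]])
    then show ?thesis by (simp add: T_def lessThan_Suc)
  qed
  have "t \<bullet> w = (\<Sum>k<CARD('n). t $ \<sigma> k * w $ \<sigma> k)"
    unfolding inner_vec_def using sum.reindex_bij_betw[OF assms(1), of "\<lambda>i. t $ i * w $ i"] by simp
  also have "\<dots> = (\<Sum>k<CARD('n). G k * (T (Suc k) - T k))"
    by (intro sum.cong) (simp_all add: G_def T_Suc)
  also have "\<dots> = (\<Sum>k<CARD('n). (G k - G (Suc k)) * T (Suc k))"
    using sum_summation_by_parts[of G T "CARD('n)"] by (simp add: G_def T_def)
  finally show ?thesis by (simp add: T_def)
qed

lemma inner_le_greedy_vector_sorted:
  fixes F :: "'n::finite set \<Rightarrow> real"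
  assumes "F {} = 0" "sorting_order w \<sigma>" "0 \<le> w" "s \<in> submodular_polyhedron F"
  shows "s \<bullet> w \<le> greedy_vector F (rank_key \<sigma>) \<bullet> w"
proof -
  have bij: "bij_betw \<sigma> {..<CARD('n)} UNIV" using sorting_order_bij[OF assms(2)] .
  define G where "G k = (if k < CARD('n) then w $ \<sigma> k else 0)" for k
  have "(G k - G (Suc k)) * sum (($) s) (\<sigma> ` {..<Suc k})
      \<le> (G k - G (Suc k)) * sum (($) (greedy_vector F (rank_key \<sigma>))) (\<sigma> ` {..<Suc k})"
    if "k < CARD('n)" for k
  proof (rule mult_left_mono)
    have "upper_set (rank_key \<sigma>) (\<sigma> ` {..<Suc k})"
      using upper_set_rank_key_prefix[OF bij] that by simp
    then show "sum (($) s) (\<sigma> ` {..<Suc k}) \<le> sum (($) (greedy_vector F (rank_key \<sigma>))) (\<sigma> ` {..<Suc k})"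
      using assms(4) sum_greedy_vector_upper_set[where F = F, OF assms(1) rank_key_inj[OF bij]]
      by (simp add: submodular_polyhedron_def)
    show "0 \<le> G k - G (Suc k)"
      using assms(2,3) that by (auto simp: G_def sorting_order_def less_eq_vec_def)
  qed
  then show ?thesis
    unfolding inner_eq_sum_prefix_sums[OF bij] G_def by (intro sum_mono) auto
qed

lemma sum_increments_eq_inner_greedy_vector:
  fixes \<sigma> :: "nat \<Rightarrow> 'n::finite"
  assumes "bij_betw \<sigma> {..<CARD('n)} UNIV"
  shows "(\<Sum>k<CARD('n). w $ \<sigma> k * (F (\<sigma> ` {..k}) - F (\<sigma> ` {..<k})))
    = greedy_vector F (rank_key \<sigma>) \<bullet> w"
proof -
  have "greedy_vector F (rank_key \<sigma>) \<bullet> w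
      = (\<Sum>k<CARD('n). greedy_vector F (rank_key \<sigma>) $ \<sigma> k * w $ \<sigma> k)"
    unfolding inner_vec_def
    using sum.reindex_bij_betw[OF assms, of "\<lambda>i. greedy_vector F (rank_key \<sigma>) $ i * w $ i"] by simp
  then show ?thesis
    by (simp add: greedy_vector_rank_key[OF assms] mult.commute)
qed

lemma sorting_order_some: "sorting_order w (SOME \<sigma>. sorting_order w \<sigma>)"
  using someI_ex[OF sorting_order_exists] .

lemma lovasz_ext_eq_inner_greedy_vector_some:
  fixes w :: "real^'n::finite"
  shows "lovasz_ext F w = greedy_vector F (rank_key (SOME \<sigma>. sorting_order w \<sigma>)) \<bullet> w"
  unfolding lovasz_ext_def Let_def
  by (intro sum_increments_eq_inner_greedy_vector sorting_order_bij[OF sorting_order_some])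

lemma inner_le_lovasz_ext:
  fixes w :: "real^'n::finite"
  assumes "F {} = 0" "0 \<le> w" "s \<in> submodular_polyhedron F"
  shows "s \<bullet> w \<le> lovasz_ext F w"
  using inner_le_greedy_vector_sorted[where F = F, OF assms(1) sorting_order_some assms(2,3)]
  by (simp add: lovasz_ext_eq_inner_greedy_vector_some)

text \<open>The choice made by \<open>SOME\<close> in \<open>lovasz_ext\<close> is irrelevant for nonnegative vectors:
  every sorting order attains the maximum of \<open>s \<bullet> w\<close> over the submodular polyhedron.\<close>

lemma lovasz_ext_eq_inner_greedy_vector:
  fixes w :: "real^'n::finite"
  assumes "submodular F" "F {} = 0" "sorting_order w \<sigma>" "0 \<le> w"
  shows "lovasz_ext F w = greedy_vector F (rank_key \<sigma>) \<bullet> w"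
proof (rule antisym)
  show "greedy_vector F (rank_key \<sigma>) \<bullet> w \<le> lovasz_ext F w"
    using greedy_vector_in_submodular_polyhedron[OF assms(1,2) rank_key_inj[OF sorting_order_bij[OF assms(3)]]]
    by (rule inner_le_lovasz_ext[where F = F, OF assms(2,4)])
  show "lovasz_ext F w \<le> greedy_vector F (rank_key \<sigma>) \<bullet> w"
    using greedy_vector_in_submodular_polyhedron[OF assms(1,2) rank_key_inj[OF sorting_order_bij[OF sorting_order_some]]]
    unfolding lovasz_ext_eq_inner_greedy_vector_some
    by (rule inner_le_greedy_vector_sorted[where F = F, OF assms(2,3,4)])
qed

lemma lovasz_ext_scaleR:
  fixes w :: "real^'n::finite"
  assumes "submodular F" "F {} = 0" "0 \<le> c" "0 \<le> w"
  shows "lovasz_ext F (c *\<^sub>R w) = c * lovasz_ext F w"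
proof -
  obtain \<sigma> where so: "sorting_order w \<sigma>" using sorting_order_exists by blast
  then have "sorting_order (c *\<^sub>R w) \<sigma>"
    using assms(3) by (auto simp: sorting_order_def intro: mult_left_mono)
  moreover have "0 \<le> c *\<^sub>R w" using assms(3,4) by (simp add: less_eq_vec_def)
  ultimately show ?thesis
    using lovasz_ext_eq_inner_greedy_vector[OF assms(1,2)] so assms(4) by simp
qed

lemma lovasz_ext_add_comonotone:
  fixes u v :: "real^'n::finite"
  assumes "submodular F" "F {} = 0" "sorting_order u \<sigma>" "sorting_order v \<sigma>" "0 \<le> u" "0 \<le> v"
  shows "lovasz_ext F (u + v) = lovasz_ext F u + lovasz_ext F v"
proof -
  have "sorting_order (u + v) \<sigma>"
    using assms(3,4) by (auto simp: sorting_order_def intro: add_mono)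
  moreover have "0 \<le> u + v" using assms(5,6) by simp
  ultimately show ?thesis
    using lovasz_ext_eq_inner_greedy_vector[OF assms(1,2)] assms(3-6) by (simp add: inner_add_right)
qed

lemma lovasz_ext_indicator:
  fixes F :: "'n::finite set \<Rightarrow> real"
  assumes "submodular F" "F {} = 0" "0 \<le> c"
  shows "lovasz_ext F (\<chi> i. if i \<in> S then c else 0) = c * F S"
proof -
  define v :: "real^'n" where "v = (\<chi> i. if i \<in> S then c else 0)"
  obtain \<sigma> where so: "sorting_order v \<sigma>" using sorting_order_exists by blast
  have "0 \<le> v" using assms(3) by (simp add: v_def less_eq_vec_def)
  then have "lovasz_ext F v = c * sum (($) (greedy_vector F (rank_key \<sigma>))) S"
    using lovasz_ext_eq_inner_greedy_vector[OF assms(1,2) so]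
    by (simp add: v_def inner_vec_def if_distrib sum.If_cases sum_distrib_left mult.commute)
  also have "\<dots> = c * F S"
  proof (cases "c = 0")
    case False
    then have "S = {i. c \<le> v $ i}" using assms(3) by (auto simp: v_def)
    then show ?thesis
      using sum_greedy_vector_upper_set[where F = F, OF assms(2) rank_key_inj[OF sorting_order_bij[OF so]]]
        upper_set_rank_key_superlevel[OF so, of c] by simp
  qed simp
  finally show ?thesis by (simp add: v_def)
qed

lemma lovasz_ext_nonneg:
  assumes "nondecreasing_setfun F" "F {} = 0" "0 \<le> w"
  shows "0 \<le> lovasz_ext F w"
  using inner_le_lovasz_ext[where F = F, OF assms(2,3) zero_in_submodular_polyhedron[OF assms(1,2)]]
  by simp

lemma lovasz_ext_pos:
  fixes w :: "real^'n::finite"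
  assumes "nondecreasing_setfun F" "F {} = 0" "\<And>k. 0 < F {k}" "0 \<le> w" "w \<noteq> 0"
  shows "0 < lovasz_ext F w"
proof -
  obtain k where "w $ k \<noteq> 0" using assms(5) by (auto simp: vec_eq_iff)
  then have "0 < w $ k" using assms(4) unfolding less_eq_vec_def by (metis order_le_less zero_index)
  then have "0 < F {k} * w $ k" using assms(3) by simp
  also have "\<dots> = (\<Sum>i\<in>UNIV. if i = k then F {k} * w $ i else 0)"
    by simp
  also have "\<dots> = (\<chi> i. if i = k then F {k} else 0) \<bullet> w"
    unfolding inner_vec_def by (intro sum.cong) auto
  also have "\<dots> \<le> lovasz_ext F w"
    by (rule inner_le_lovasz_ext[OF assms(2,4) singleton_in_submodular_polyhedron[OF assms(1,2)]])
  finally show ?thesis .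
qed

definition level_key :: "('n \<Rightarrow> nat) \<Rightarrow> ('n \<Rightarrow> real) \<Rightarrow> 'n \<Rightarrow> real" where
  "level_key b r i = real (b i) + r i"

lemma tie_breaker_exists: "\<exists>r :: 'n::finite \<Rightarrow> real. inj r \<and> range r \<subseteq> {0..<1}"
proof -
  obtain h where h: "bij_betw h (UNIV :: 'n set) {0..<CARD('n)}"
    using ex_bij_betw_finite_nat[of "UNIV :: 'n set"] by auto
  define r where "r i = real (h i) / real CARD('n)" for i
  have "inj r" using bij_betw_imp_inj_on[OF h] by (auto simp: inj_on_def r_def)
  moreover have "range r \<subseteq> {0..<1}"
    using bij_betwE[OF h] by (auto simp: r_def)
  ultimately show ?thesis by blast
qed

lemma level_key_less_iff:
  assumes "range r \<subseteq> {0..<1}"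
  shows "level_key b r i < level_key b r j \<longleftrightarrow> b i < b j \<or> (b i = b j \<and> r i < r j)"
proof -
  have "r i < 1" "0 \<le> r j" "r j < 1" "0 \<le> r i" using assms by (auto simp: image_subset_iff)
  then show ?thesis
    by (cases "b i < b j"; cases "b j < b i") (auto simp: level_key_def)
qed

lemma inj_level_key:
  assumes "inj r" "range r \<subseteq> {0..<1}"
  shows "inj (level_key b r)"
proof (rule injI)
  fix i j assume "level_key b r i = level_key b r j"
  then have "b i = b j \<and> r i = r j"
    using level_key_less_iff[OF assms(2), of b i j] level_key_less_iff[OF assms(2), of b j i]
    by (auto simp: linorder_neq_iff)
  then show "i = j" using injD[OF assms(1)] by blast
qed

lemma upper_set_level_key:
  assumes "range r \<subseteq> {0..<1}"
  shows "upper_set (level_key b r) {i. m \<le> b i}"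
  by (auto simp: upper_set_def level_key_less_iff[OF assms])

lemma greedy_vector_level_key_mono:
  assumes "submodular F" "inj r" "range r \<subseteq> {0..<1}"
    and "\<And>j. b' i < b' j \<or> (b' i = b' j \<and> r i < r j) \<Longrightarrow> b i < b j \<or> (b i = b j \<and> r i < r j)"
  shows "greedy_vector F (level_key b r) $ i \<le> greedy_vector F (level_key b' r) $ i"
  using assms(4)
  by (intro greedy_vector_mono[OF assms(1) inj_level_key[OF assms(2,3)] inj_level_key[OF assms(2,3)]])
    (auto simp: level_key_less_iff[OF assms(3)])

lemma level_greedy_vector:
  fixes F :: "'n::finite set \<Rightarrow> real"
  assumes "submodular F" "F {} = 0" "inj r" "range r \<subseteq> {0..<1}"
  shows "greedy_vector F (level_key b r) \<in> submodular_polyhedron F"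
    and "sum (($) (greedy_vector F (level_key b r))) {i. m \<le> b i} = F {i. m \<le> b i}"
  using greedy_vector_in_submodular_polyhedron[OF assms(1,2) inj_level_key[OF assms(3,4)]]
    sum_greedy_vector_upper_set[where F = F, OF assms(2) inj_level_key[OF assms(3,4)]
      upper_set_level_key[OF assms(4)]]
  by blast+

section \<open>Tight vectors on inseparable sets\<close>

lemma inner_vec_eq_sum_on:
  fixes s u :: "real^'n::finite"
  assumes "\<And>i. i \<notin> A \<Longrightarrow> u $ i = 0"
  shows "s \<bullet> u = (\<Sum>i\<in>A. s $ i * u $ i)"
  unfolding inner_vec_def inner_real_def using assms by (intro sum.mono_neutral_right) auto

lemma sum_mult_eq_imp_eq_below_max:
  fixes s1 s2 u :: "'a \<Rightarrow> real"
  assumes "finite A" "T \<subseteq> A" "\<forall>i\<in>T. u i = c" "\<forall>i\<in>A - T. u i < c" "\<forall>i\<in>A - T. s1 i \<le> s2 i"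
    and "sum s1 A = sum s2 A" "(\<Sum>i\<in>A. s1 i * u i) = (\<Sum>i\<in>A. s2 i * u i)"
  shows "\<forall>i\<in>A - T. s1 i = s2 i"
proof -
  have "(\<Sum>i\<in>A - T. (s2 i - s1 i) * (c - u i)) = (\<Sum>i\<in>A. (s2 i - s1 i) * (c - u i))"
    using assms(1-3) by (intro sum.mono_neutral_left) simp_all
  also have "\<dots> = (\<Sum>i\<in>A. (c * s2 i - c * s1 i) - (s2 i * u i - s1 i * u i))"
    by (intro sum.cong) (simp_all add: algebra_simps)
  also have "\<dots> = c * (sum s2 A - sum s1 A) - ((\<Sum>i\<in>A. s2 i * u i) - (\<Sum>i\<in>A. s1 i * u i))"
    by (simp only: sum_subtractf sum_distrib_left right_diff_distrib)
  also have "\<dots> = 0" using assms(6,7) by simp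
  finally have "(\<Sum>i\<in>A - T. (s2 i - s1 i) * (c - u i)) = 0" .
  moreover have "\<forall>i\<in>A - T. 0 \<le> (s2 i - s1 i) * (c - u i)"
  proof
    fix i assume "i \<in> A - T"
    then have "u i < c" "s1 i \<le> s2 i" using assms(4,5) by blast+
    then show "0 \<le> (s2 i - s1 i) * (c - u i)" by simp
  qed
  ultimately have "\<forall>i\<in>A - T. (s2 i - s1 i) * (c - u i) = 0"
    using sum_nonneg_eq_0_iff[of "A - T" "\<lambda>i. (s2 i - s1 i) * (c - u i)"] assms(1) by simp
  then show ?thesis using assms(4) by force
qed

text \<open>The two greedy vectors that list the top level \<open>T\<close> of \<open>u\<close> first, respectively last,
  within \<open>A\<close> must agree below the top level; this forces the split \<open>F A = F T + F (A - T)\<close>.\<close>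

lemma inseparable_set_top_level_eq:
  fixes F :: "'n::finite set \<Rightarrow> real" and u :: "real^'n"
  assumes "submodular F" "F {} = 0" "inseparable_set F A"
    and supp: "\<And>i. i \<notin> A \<Longrightarrow> u $ i = 0"
    and tight: "\<And>s. s \<in> submodular_polyhedron F \<Longrightarrow> sum (($) s) A = F A \<Longrightarrow> s \<bullet> u = 1"
    and T: "T \<noteq> {}" "T \<subseteq> A" "\<forall>i\<in>T. u $ i = c" "\<forall>i\<in>A - T. u $ i < c"
  shows "T = A"
proof (rule ccontr)
  assume "T \<noteq> A"
  obtain r :: "'n \<Rightarrow> real" where r: "inj r" "range r \<subseteq> {0..<1}"
    using tie_breaker_exists by blast
  define b1 where "b1 i = (if i \<in> T then 2 else if i \<in> A then 1 else 0 :: nat)" for i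
  define b2 where "b2 i = (if i \<in> A - T then 2 else if i \<in> A then 1 else 0 :: nat)" for i
  define g1 where "g1 = greedy_vector F (level_key b1 r)"
  define g2 where "g2 = greedy_vector F (level_key b2 r)"
  have levels: "{i. 1 \<le> b1 i} = A" "{i. 2 \<le> b1 i} = T" "{i. 1 \<le> b2 i} = A" "{i. 2 \<le> b2 i} = A - T"
    using T(2) by (auto simp: b1_def b2_def)
  have g1: "g1 \<in> submodular_polyhedron F" "sum (($) g1) A = F A" "sum (($) g1) T = F T"
    using level_greedy_vector(1)[OF assms(1,2) r, of b1] level_greedy_vector(2)[OF assms(1,2) r, of b1 1]
      level_greedy_vector(2)[OF assms(1,2) r, of b1 2]
    unfolding g1_def levels by simp_all
  have g2: "g2 \<in> submodular_polyhedron F" "sum (($) g2) A = F A" "sum (($) g2) (A - T) = F (A - T)"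
    using level_greedy_vector(1)[OF assms(1,2) r, of b2] level_greedy_vector(2)[OF assms(1,2) r, of b2 1]
      level_greedy_vector(2)[OF assms(1,2) r, of b2 2]
    unfolding g2_def levels by simp_all
  have "\<forall>i\<in>A - T. g1 $ i \<le> g2 $ i"
    unfolding g1_def g2_def
    by (intro ballI greedy_vector_level_key_mono[OF assms(1) r]) (auto simp: b1_def b2_def split: if_splits)
  moreover have "(\<Sum>i\<in>A. g1 $ i * u $ i) = (\<Sum>i\<in>A. g2 $ i * u $ i)"
    using tight[OF g1(1,2)] tight[OF g2(1,2)] inner_vec_eq_sum_on[OF supp] by simp
  ultimately have "\<forall>i\<in>A - T. g1 $ i = g2 $ i"
    using sum_mult_eq_imp_eq_below_max[OF _ T(2-4)] g1(2) g2(2) by simp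
  then have "sum (($) g1) (A - T) = F (A - T)" using g2(3) by simp
  moreover have "sum (($) g1) (A - T) = F A - F T"
    using g1(2,3) T(2) by (simp add: sum_diff)
  ultimately have "separable_set F A"
    using T(1,2) \<open>T \<noteq> A\<close> by (intro separable_setI[of T]) auto
  then show False using assms(3) by (simp add: inseparable_set_def)
qed

lemma inseparable_set_tight_imp_const:
  fixes F :: "'n::finite set \<Rightarrow> real" and u :: "real^'n"
  assumes "submodular F" "F {} = 0" "inseparable_set F A"
    and supp: "\<And>i. i \<notin> A \<Longrightarrow> u $ i = 0"
    and tight: "\<And>s. s \<in> submodular_polyhedron F \<Longrightarrow> sum (($) s) A = F A \<Longrightarrow> s \<bullet> u = 1"
    and "i \<in> A"
  shows "u $ i = 1 / F A"
proof -
  have "A \<noteq> {}" using assms(3) by (simp add: inseparable_set_def)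
  define c where "c = Max ((($) u) ` A)"
  define T where "T = {i\<in>A. u $ i = c}"
  have "c \<in> ($) u ` A" using \<open>A \<noteq> {}\<close> by (simp add: c_def)
  then have "T \<noteq> {}" by (auto simp: T_def)
  moreover have "\<forall>i\<in>A - T. u $ i < c"
  proof
    fix i assume "i \<in> A - T"
    then have "u $ i \<le> c" "u $ i \<noteq> c" by (simp_all add: c_def T_def)
    then show "u $ i < c" by simp
  qed
  moreover have "T \<subseteq> A" "\<forall>i\<in>T. u $ i = c" by (simp_all add: T_def)
  ultimately have TA: "T = A"
    using inseparable_set_top_level_eq[OF assms(1-3) supp tight] by blast
  obtain r :: "'n \<Rightarrow> real" where r: "inj r" "range r \<subseteq> {0..<1}"
    using tie_breaker_exists by blast
  define b where "b i = (if i \<in> A then 1 else 0 :: nat)" for i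
  define g where "g = greedy_vector F (level_key b r)"
  have "{i. 1 \<le> b i} = A" by (auto simp: b_def)
  then have g: "g \<in> submodular_polyhedron F" "sum (($) g) A = F A"
    using level_greedy_vector(1)[OF assms(1,2) r, of b] level_greedy_vector(2)[OF assms(1,2) r, of b 1]
    unfolding g_def by simp_all
  have "1 = (\<Sum>i\<in>A. g $ i * u $ i)" using tight[OF g] inner_vec_eq_sum_on[OF supp] by simp
  also have "\<dots> = (\<Sum>i\<in>A. g $ i * c)"
    using TA by (intro sum.cong) (auto simp: T_def)
  also have "\<dots> = c * F A"
    by (metis g(2) mult.commute sum_distrib_right)
  finally have "c * F A = 1" ..
  moreover have "u $ i = c" using TA assms(6) by (auto simp: T_def)
  ultimately show ?thesis by (metis eq_divide_eq mult.commute mult_zero_right zero_neq_one)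
qed

section \<open>Extreme points of the unit ball\<close>

lemma vabs_nth [simp]: "vabs w $ i = \<bar>w $ i\<bar>"
  by (simp add: vabs_def)

lemma vabs_nonneg: "0 \<le> vabs w"
  by (simp add: less_eq_vec_def)

lemma vabs_scaleR: "0 \<le> c \<Longrightarrow> vabs (c *\<^sub>R w) = c *\<^sub>R vabs w"
  by (simp add: vec_eq_iff abs_mult)

lemma extreme_point_of_convex_combination_eq:
  assumes "x extreme_point_of S" "y \<in> S" "z \<in> S" "0 < t" "t < 1" "x = (1 - t) *\<^sub>R y + t *\<^sub>R z"
  shows "y = z"
  using assms unfolding extreme_point_of_def in_segment by blast

lemma abs_convex_combination_eq_imp_eq:
  fixes a b t :: real
  assumes "0 < t" "t < 1" "\<bar>a\<bar> = \<bar>b\<bar>" "\<bar>(1 - t) * a + t * b\<bar> = \<bar>a\<bar>"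
  shows "a = b"
proof (rule ccontr)
  assume "a \<noteq> b"
  then have "b = - a" "a \<noteq> 0" using assms(3) by (auto simp: abs_eq_iff)
  then have "\<bar>1 - 2 * t\<bar> * \<bar>a\<bar> = \<bar>a\<bar>"
    using assms(4) by (simp add: abs_mult[symmetric] algebra_simps)
  then have "\<bar>1 - 2 * t\<bar> = 1" using \<open>a \<noteq> 0\<close> by simp
  then show False using assms(1,2) by linarith
qed

definition sign_vector_on :: "real^'n::finite \<Rightarrow> 'n set \<Rightarrow> real^'n" where
  "sign_vector_on x S = (\<chi> i. if i \<in> S then sgn (x $ i) else 0)"

lemma abs_sign_vector_on:
  assumes "S \<subseteq> supp x"
  shows "\<bar>sign_vector_on x S $ i\<bar> = (if i \<in> S then 1 else 0)"
  using assms by (auto simp: sign_vector_on_def supp_def abs_sgn_eq)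

lemma sign_vector_on_Un:
  "S \<inter> T = {} \<Longrightarrow> sign_vector_on x (S \<union> T) = sign_vector_on x S + sign_vector_on x T"
  by (auto simp: vec_eq_iff sign_vector_on_def)

locale submodular_norm =
  fixes F :: "'n::finite set \<Rightarrow> real"
  assumes submodular: "submodular F"
    and nondecreasing: "nondecreasing_setfun F"
    and empty: "F {} = 0"
    and singleton_pos: "\<And>k. 0 < F {k}"
begin

abbreviation unit_ball :: "(real^'n) set" where
  "unit_ball \<equiv> {w. lovasz_ext F (vabs w) \<le> 1}"

lemma pos:
  assumes "B \<noteq> {}"
  shows "0 < F B"
proof -
  obtain k where "k \<in> B" using assms by blast
  then have "F {k} \<le> F B" using nondecreasing by (simp add: nondecreasing_setfun_def)
  then show ?thesis using singleton_pos[of k] by linarith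
qed

lemma lovasz_ext_vabs_indicator:
  assumes "0 \<le> c" "\<And>i. \<bar>w $ i\<bar> = (if i \<in> S then c else 0)"
  shows "lovasz_ext F (vabs w) = c * F S"
proof -
  have "vabs w = (\<chi> i. if i \<in> S then c else 0)" using assms(2) by (simp add: vec_eq_iff)
  then show ?thesis using lovasz_ext_indicator[OF submodular empty assms(1)] by simp
qed

lemma normalized_sign_vector_on_in_unit_ball:
  assumes "S \<noteq> {}" "S \<subseteq> supp x"
  shows "lovasz_ext F (vabs ((1 / F S) *\<^sub>R sign_vector_on x S)) = 1"
proof -
  have "\<bar>((1 / F S) *\<^sub>R sign_vector_on x S) $ i\<bar> = (if i \<in> S then 1 / F S else 0)" for i
    using abs_sign_vector_on[OF assms(2), of i] pos[OF assms(1)] by (simp add: abs_mult)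
  then show ?thesis
    using lovasz_ext_vabs_indicator[of "1 / F S"] pos[OF assms(1)] by simp
qed

lemma inner_vabs_le_one:
  assumes "y \<in> unit_ball" "s \<in> submodular_polyhedron F"
  shows "s \<bullet> vabs y \<le> 1"
  using inner_le_lovasz_ext[where F = F, OF empty vabs_nonneg assms(2), of y] assms(1) by simp

lemma inner_vabs_indicator:
  fixes g x :: "real^'n"
  assumes "\<And>i. \<bar>x $ i\<bar> = (if i \<in> A then c else 0)"
  shows "g \<bullet> vabs x = c * sum (($) g) A"
proof -
  have "g \<bullet> vabs x = (\<Sum>i\<in>A. g $ i * vabs x $ i)"
    by (rule inner_vec_eq_sum_on) (simp add: assms)
  also have "\<dots> = (\<Sum>i\<in>A. g $ i * c)"
    using assms by (intro sum.cong) simp_all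
  finally show ?thesis by (metis mult.commute sum_distrib_right)
qed

lemma extreme_point_nonzero:
  assumes "x extreme_point_of unit_ball"
  shows "x \<noteq> 0"
proof
  assume "x = 0"
  fix k :: 'n
  define y :: "real^'n" where "y = (\<chi> i. if i = k then 1 / F {k} else 0)"
  have "lovasz_ext F (vabs v) = 1" if "v = y \<or> v = - y" for v
    using that singleton_pos[of k]
    by (subst lovasz_ext_vabs_indicator[of "1 / F {k}" _ "{k}"]) (auto simp: y_def)
  then have mem: "y \<in> unit_ball" "- y \<in> unit_ball" by auto
  have "x = (1 - 1 / 2) *\<^sub>R y + (1 / 2) *\<^sub>R (- y)" using \<open>x = 0\<close> by simp
  then have "y = - y"
    using extreme_point_of_convex_combination_eq[OF assms mem, of "1 / 2"] by simp
  then have "y $ k = (- y) $ k" by (rule arg_cong)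
  then show False using singleton_pos[of k] by (simp add: y_def)
qed

lemma extreme_point_lovasz_ext_eq_one:
  assumes "x extreme_point_of unit_ball"
  shows "lovasz_ext F (vabs x) = 1"
proof (rule ccontr)
  define \<omega> where "\<omega> = lovasz_ext F (vabs x)"
  assume "lovasz_ext F (vabs x) \<noteq> 1"
  moreover have "\<omega> \<le> 1" using assms by (simp add: extreme_point_of_def \<omega>_def)
  ultimately have "\<omega> < 1" by (simp add: \<omega>_def)
  have "0 \<le> \<omega>" using lovasz_ext_nonneg[OF nondecreasing empty vabs_nonneg] by (simp add: \<omega>_def)
  have scaled: "lovasz_ext F (vabs (c *\<^sub>R x)) = c * \<omega>" if "0 \<le> c" for c
    using lovasz_ext_scaleR[OF submodular empty that vabs_nonneg[of x]] vabs_scaleR[OF that, of x]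
    by (simp add: \<omega>_def)
  have "\<omega> * \<omega> \<le> 1" using \<open>0 \<le> \<omega>\<close> \<open>\<omega> < 1\<close> by (simp add: mult_le_one)
  moreover have "(2 - \<omega>) * \<omega> = 1 - (1 - \<omega>)\<^sup>2" by (simp add: power2_eq_square algebra_simps)
  then have "(2 - \<omega>) * \<omega> \<le> 1" by simp
  ultimately have mem: "\<omega> *\<^sub>R x \<in> unit_ball" "(2 - \<omega>) *\<^sub>R x \<in> unit_ball"
    using scaled[of \<omega>] scaled[of "2 - \<omega>"] \<open>0 \<le> \<omega>\<close> \<open>\<omega> < 1\<close> by simp_all
  have eq: "x = (1 - 1 / 2) *\<^sub>R (\<omega> *\<^sub>R x) + (1 / 2) *\<^sub>R ((2 - \<omega>) *\<^sub>R x)"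
    by (simp add: scaleR_add_left[symmetric] algebra_simps)
  have "\<omega> *\<^sub>R x = (2 - \<omega>) *\<^sub>R x"
    using extreme_point_of_convex_combination_eq[OF assms mem _ _ eq] by simp
  then show False
    using \<open>\<omega> < 1\<close> extreme_point_nonzero[OF assms] by (simp add: scaleR_cancel_right)
qed

text \<open>Splitting \<open>\<bar>x\<bar>\<close> into two comonotone parts splits \<open>x\<close> into a convex combination of two
  points of the sphere (additivity of the Lov\'asz extension on comonotone vectors); at an extreme
  point these two points coincide.\<close>

lemma extreme_point_comonotone_split:
  assumes x: "x extreme_point_of unit_ball"
    and "sorting_order p \<sigma>" "sorting_order q \<sigma>" "0 \<le> p" "0 \<le> q" "p + q = vabs x"
    and "p \<noteq> 0" "q \<noteq> 0"
  shows "lovasz_ext F q *\<^sub>R p = lovasz_ext F p *\<^sub>R q"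
proof -
  define l1 where "l1 = lovasz_ext F p"
  define l2 where "l2 = lovasz_ext F q"
  have l: "0 < l1" "0 < l2"
    using lovasz_ext_pos[OF nondecreasing empty singleton_pos] assms(4,5,7,8)
    by (simp_all add: l1_def l2_def)
  have "l1 + l2 = 1"
    using lovasz_ext_add_comonotone[OF submodular empty assms(2-5)] assms(6)
      extreme_point_lovasz_ext_eq_one[OF x] by (simp add: l1_def l2_def)
  have pq: "p $ i + q $ i = \<bar>x $ i\<bar>" "0 \<le> p $ i" "0 \<le> q $ i" for i
    using assms(4,5) arg_cong[OF assms(6), of "\<lambda>v. v $ i"] by (simp_all add: less_eq_vec_def)
  define u :: "real^'n" where "u = (\<chi> i. sgn (x $ i) * p $ i)"
  define v :: "real^'n" where "v = (\<chi> i. sgn (x $ i) * q $ i)"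
  have "p $ i = 0" "q $ i = 0" if "x $ i = 0" for i
    using pq[of i] that by (simp_all add: add_nonneg_eq_0_iff)
  then have "vabs u = p" "vabs v = q"
    using pq by (auto simp: vec_eq_iff u_def v_def abs_mult abs_sgn_eq)
  then have vabs_y: "vabs ((1 / l1) *\<^sub>R u) = (1 / l1) *\<^sub>R p" "vabs ((1 / l2) *\<^sub>R v) = (1 / l2) *\<^sub>R q"
    using l by (simp_all add: vabs_scaleR)
  then have "lovasz_ext F (vabs ((1 / l1) *\<^sub>R u)) = 1" "lovasz_ext F (vabs ((1 / l2) *\<^sub>R v)) = 1"
    using lovasz_ext_scaleR[OF submodular empty _ assms(4)]
      lovasz_ext_scaleR[OF submodular empty _ assms(5)] l by (simp_all add: l1_def l2_def)
  then have mem: "(1 / l1) *\<^sub>R u \<in> unit_ball" "(1 / l2) *\<^sub>R v \<in> unit_ball" by simp_all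
  have "x = u + v"
    using pq(1) by (simp add: vec_eq_iff u_def v_def sgn_mult_abs flip: distrib_left)
  moreover have "1 - l2 = l1" using \<open>l1 + l2 = 1\<close> by simp
  ultimately have eq: "x = (1 - l2) *\<^sub>R ((1 / l1) *\<^sub>R u) + l2 *\<^sub>R ((1 / l2) *\<^sub>R v)"
    using l by simp
  have "l2 < 1" using l \<open>l1 + l2 = 1\<close> by linarith
  then have "(1 / l1) *\<^sub>R u = (1 / l2) *\<^sub>R v"
    by (rule extreme_point_of_convex_combination_eq[OF x mem l(2) _ eq])
  then have "(1 / l1) *\<^sub>R p = (1 / l2) *\<^sub>R q" using vabs_y by metis
  then have "p $ i / l1 = q $ i / l2" for i
    by (metis vector_scaleR_component real_scaleR_def divide_inverse_commute inverse_eq_divide)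
  then have "l2 * p $ i = l1 * q $ i" for i using l by (simp add: field_simps)
  then show ?thesis by (simp add: vec_eq_iff l1_def l2_def)
qed

lemma extreme_point_abs_not_less:
  assumes x: "x extreme_point_of unit_ball" and "x $ i \<noteq> 0"
  shows "\<not> \<bar>x $ i\<bar> < \<bar>x $ j\<bar>"
proof
  assume lt: "\<bar>x $ i\<bar> < \<bar>x $ j\<bar>"
  define d where "d = \<bar>x $ i\<bar>"
  have "0 < d" using assms(2) by (simp add: d_def)
  define p :: "real^'n" where "p = (\<chi> k. max (vabs x $ k - d) 0)"
  define q :: "real^'n" where "q = (\<chi> k. min (vabs x $ k) d)"
  obtain \<sigma> where so: "sorting_order (vabs x) \<sigma>" using sorting_order_exists by blast
  have "mono (\<lambda>t::real. max (t - d) 0)" "mono (\<lambda>t::real. min t d)" by (auto intro!: monoI)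
  then have so_pq: "sorting_order p \<sigma>" "sorting_order q \<sigma>"
    using sorting_order_map[OF so, of "\<lambda>t. max (t - d) 0"] sorting_order_map[OF so, of "\<lambda>t. min t d"]
    by (simp_all add: p_def q_def)
  have pq: "0 \<le> p" "0 \<le> q" "p + q = vabs x"
    using \<open>0 < d\<close> by (auto simp: p_def q_def less_eq_vec_def vec_eq_iff max_def min_def)
  have "p $ j \<noteq> 0" "q $ i \<noteq> 0" using lt \<open>0 < d\<close> by (simp_all add: p_def q_def d_def)
  then have nonzero: "p \<noteq> 0" "q \<noteq> 0" by auto
  have "lovasz_ext F q *\<^sub>R p = lovasz_ext F p *\<^sub>R q"
    by (rule extreme_point_comonotone_split[OF x so_pq pq nonzero])
  then have "lovasz_ext F q * p $ i = lovasz_ext F p * q $ i"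
    by (metis vector_scaleR_component real_scaleR_def)
  moreover have "0 < lovasz_ext F p"
    using lovasz_ext_pos[OF nondecreasing empty singleton_pos pq(1) nonzero(1)] .
  ultimately show False using \<open>0 < d\<close> by (simp add: p_def q_def d_def)
qed

lemma extreme_point_supp_nonempty:
  assumes "x extreme_point_of unit_ball"
  shows "supp x \<noteq> {}"
  using extreme_point_nonzero[OF assms] by (auto simp: supp_def vec_eq_iff)

lemma extreme_point_abs_eq:
  assumes x: "x extreme_point_of unit_ball"
  shows "\<bar>x $ i\<bar> = (if i \<in> supp x then 1 / F (supp x) else 0)"
proof -
  define A where "A = supp x"
  obtain k where "k \<in> A" using extreme_point_supp_nonempty[OF x] by (auto simp: A_def)
  define c where "c = \<bar>x $ k\<bar>"
  have absx: "\<bar>x $ j\<bar> = (if j \<in> A then c else 0)" for j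
    using extreme_point_abs_not_less[OF x, of k j] extreme_point_abs_not_less[OF x, of j k] \<open>k \<in> A\<close>
    by (auto simp: A_def supp_def c_def)
  have "c * F A = 1"
    using lovasz_ext_vabs_indicator[OF _ absx] extreme_point_lovasz_ext_eq_one[OF x] by (simp add: c_def)
  moreover have "0 < F A" using pos \<open>k \<in> A\<close> by blast
  ultimately have "c = 1 / F A" by (simp add: field_simps)
  then show ?thesis using absx by (simp add: A_def)
qed

lemma extreme_point_eq_normalized_sign_vector:
  assumes "x extreme_point_of unit_ball"
  shows "x = (1 / F (supp x)) *\<^sub>R sign_vector_on x (supp x)"
proof -
  have "x $ i = sgn (x $ i) / F (supp x)" for i
  proof (cases "x $ i = 0")
    case False
    then have "\<bar>x $ i\<bar> = 1 / F (supp x)"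
      using extreme_point_abs_eq[OF assms, of i] by (simp add: supp_def)
    then show ?thesis using sgn_mult_abs[of "x $ i"] by simp
  qed simp
  then show ?thesis by (simp add: vec_eq_iff sign_vector_on_def supp_def)
qed

lemma extreme_point_stable:
  assumes x: "x extreme_point_of unit_ball"
  shows "stable_set F (supp x)"
  unfolding stable_set_def
proof (intro allI impI)
  define A where "A = supp x"
  define c where "c = 1 / F A"
  have "0 < F A" using pos[OF extreme_point_supp_nonempty[OF x]] by (simp add: A_def)
  then have "0 < c" "c * F A = 1" by (simp_all add: c_def)
  fix B assume "supp x \<subset> B"
  then obtain j where j: "j \<in> B" "j \<notin> A" by (auto simp: A_def)
  show "F (supp x) < F B"
  proof (rule ccontr)
    assume "\<not> F (supp x) < F B"
    moreover have "insert j A \<subseteq> B" using \<open>supp x \<subset> B\<close> j by (auto simp: A_def)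
    then have "F (insert j A) \<le> F B" "F A \<le> F (insert j A)"
      using nondecreasing unfolding nondecreasing_setfun_def by blast+
    ultimately have "F (insert j A) = F A" by (simp add: A_def)
    define e :: "real^'n" where "e = (\<chi> i. if i = j then c else 0)"
    have "\<bar>(x + e) $ i\<bar> = (if i \<in> insert j A then c else 0)"
      "\<bar>(x - e) $ i\<bar> = (if i \<in> insert j A then c else 0)" for i
      using extreme_point_abs_eq[OF x, of i] extreme_point_abs_eq[OF x, of j] j(2) \<open>0 < c\<close>
      by (auto simp: e_def A_def c_def)
    then have "lovasz_ext F (vabs (x + e)) = c * F (insert j A)"
      "lovasz_ext F (vabs (x - e)) = c * F (insert j A)"
      using lovasz_ext_vabs_indicator \<open>0 < c\<close> by simp_all
    then have "lovasz_ext F (vabs (x + e)) = 1" "lovasz_ext F (vabs (x - e)) = 1"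
      using \<open>c * F A = 1\<close> \<open>F (insert j A) = F A\<close> by simp_all
    then have mem: "x + e \<in> unit_ball" "x - e \<in> unit_ball" by simp_all
    have "x = (1 - 1 / 2) *\<^sub>R (x + e) + (1 / 2) *\<^sub>R (x - e)"
      by (simp add: vec_eq_iff algebra_simps)
    then have "x + e = x - e"
      using extreme_point_of_convex_combination_eq[OF x mem, of "1 / 2"] by simp
    then have "(x + e) $ j = (x - e) $ j" by (rule arg_cong)
    then show False using \<open>0 < c\<close> by (simp add: e_def)
  qed
qed

lemma extreme_point_inseparable:
  assumes x: "x extreme_point_of unit_ball"
  shows "inseparable_set F (supp x)"
proof -
  define A where "A = supp x"
  have "\<not> separable_set F A"
  proof
    assume "separable_set F A"
    then obtain T where T: "T \<noteq> {}" "T \<subset> A" "F A = F T + F (A - T)"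
      by (rule separable_setD[OF submodular nondecreasing empty])
    define C where "C = A - T"
    have "C \<noteq> {}" "T \<inter> C = {}" "T \<union> C = A" using T(2) by (auto simp: C_def)
    have F: "0 < F T" "0 < F C" "F A = F T + F C"
      using pos T(1,3) \<open>C \<noteq> {}\<close> by (simp_all add: C_def)
    define y where "y = (1 / F T) *\<^sub>R sign_vector_on x T"
    define z where "z = (1 / F C) *\<^sub>R sign_vector_on x C"
    have "y \<in> unit_ball" "z \<in> unit_ball"
      using normalized_sign_vector_on_in_unit_ball T(1,2) \<open>C \<noteq> {}\<close>
      by (simp_all add: y_def z_def A_def C_def)
    moreover define t where "t = F C / F A"
    moreover have "0 < t" "t < 1" using F by (simp_all add: t_def)
    moreover have "x = (1 - t) *\<^sub>R y + t *\<^sub>R z"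
    proof -
      have "1 - t = F T / F A" using F by (simp add: t_def field_simps)
      then have "(1 - t) / F T = 1 / F A" "t / F C = 1 / F A" using F by (simp_all add: t_def)
      then have "(1 - t) *\<^sub>R y + t *\<^sub>R z
          = (1 / F A) *\<^sub>R (sign_vector_on x T + sign_vector_on x C)"
        by (simp add: y_def z_def scaleR_add_right)
      also have "\<dots> = (1 / F A) *\<^sub>R sign_vector_on x A"
        using sign_vector_on_Un[OF \<open>T \<inter> C = {}\<close>] \<open>T \<union> C = A\<close> by simp
      finally show ?thesis
        using extreme_point_eq_normalized_sign_vector[OF x] by (simp add: A_def)
    qed
    ultimately have "y = z"
      using extreme_point_of_convex_combination_eq[OF x] by blast
    obtain i where "i \<in> T" using T(1) by blast
    then have "y $ i \<noteq> 0" "z $ i = 0"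
      using T(2) F by (auto simp: y_def z_def C_def A_def sign_vector_on_def supp_def sgn_if)
    with \<open>y = z\<close> show False by simp
  qed
  then show ?thesis
    using extreme_point_supp_nonempty[OF x] by (simp add: inseparable_set_def A_def)
qed

lemma extreme_point_imp_normalized_sign_vector:
  assumes "x extreme_point_of unit_ball"
  shows "\<exists>s A. (\<forall>i. s $ i \<in> {-1, 0, 1}) \<and> supp s = A \<and>
    stable_set F A \<and> inseparable_set F A \<and> x = (1 / F A) *\<^sub>R s"
proof -
  have "\<forall>i. sign_vector_on x (supp x) $ i \<in> {-1, 0, 1}" "supp (sign_vector_on x (supp x)) = supp x"
    by (auto simp: sign_vector_on_def sgn_if supp_def)
  then show ?thesis
    using extreme_point_stable[OF assms] extreme_point_inseparable[OF assms]
      extreme_point_eq_normalized_sign_vector[OF assms] by blast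
qed

text \<open>Stability makes every coordinate outside \<open>A\<close>, and positivity of singletons every coordinate
  inside \<open>A\<close>, strictly positive for some greedy vector that is tight on \<open>A\<close>.\<close>

lemma stable_set_tight_certificate:
  assumes "stable_set F A"
  obtains g where "g \<in> submodular_polyhedron F" "0 \<le> g" "sum (($) g) A = F A" "0 < g $ i"
proof -
  obtain r :: "'n \<Rightarrow> real" where r: "inj r" "range r \<subseteq> {0..<1}"
    using tie_breaker_exists by blast
  have g: "greedy_vector F (level_key b r) \<in> submodular_polyhedron F"
    "0 \<le> greedy_vector F (level_key b r)"
    "sum (($) (greedy_vector F (level_key b r))) {k. m \<le> b k} = F {k. m \<le> b k}"
    "greedy_vector F (level_key b r) $ i
      = F (insert i {j. level_key b r i < level_key b r j}) - F {j. level_key b r i < level_key b r j}"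
    for b m
  proof -
    show "greedy_vector F (level_key b r) \<in> submodular_polyhedron F"
      by (rule level_greedy_vector(1)[OF submodular empty r])
    show "sum (($) (greedy_vector F (level_key b r))) {k. m \<le> b k} = F {k. m \<le> b k}"
      by (rule level_greedy_vector(2)[OF submodular empty r])
    show "0 \<le> greedy_vector F (level_key b r)"
      using greedy_vector_nonneg[OF nondecreasing] by (simp add: less_eq_vec_def)
    show "greedy_vector F (level_key b r) $ i
      = F (insert i {j. level_key b r i < level_key b r j}) - F {j. level_key b r i < level_key b r j}"
      by (rule greedy_vector_nth[OF inj_level_key[OF r]])
  qed
  show ?thesis
  proof (cases "i \<in> A")
    case True
    define b where "b k = (if k = i then 2 else if k \<in> A then 1 else 0 :: nat)" for k
    have "{k. 1 \<le> b k} = A" using True by (auto simp: b_def)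
    moreover have "{j. level_key b r i < level_key b r j} = {}"
      by (auto simp: level_key_less_iff[OF r(2)] b_def split: if_splits)
    ultimately show ?thesis
      using that[OF g(1,2)] g(3)[of b 1] g(4)[of b] singleton_pos[of i] empty by simp
  next
    case False
    define b where "b k = (if k \<in> A then 2 else if k = i then 1 else 0 :: nat)" for k
    have "{k. 2 \<le> b k} = A" by (auto simp: b_def)
    moreover have "{j. level_key b r i < level_key b r j} = A"
      using False by (auto simp: level_key_less_iff[OF r(2)] b_def split: if_splits)
    moreover have "F A < F (insert i A)"
      using assms False unfolding stable_set_def by blast
    ultimately show ?thesis
      using that[OF g(1,2)] g(3)[of b 2] g(4)[of b] by simp
  qed
qed

text \<open>A tight nonnegative \<open>g\<close> attains the maximum \<open>1 = g \<bullet> \<bar>x\<bar>\<close> of the convex function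
  \<open>g \<bullet> \<bar>\<cdot>\<bar>\<close> on the ball; hence no cancellation can occur in \<open>x = (1 - t) y + t z\<close>
  where \<open>g\<close> is positive.\<close>

lemma convex_combination_abs_eq:
  assumes y: "y \<in> unit_ball" and z: "z \<in> unit_ball" and t: "0 \<le> t" "t \<le> 1"
    and x: "x = (1 - t) *\<^sub>R y + t *\<^sub>R z"
    and absx: "\<And>i. \<bar>x $ i\<bar> = (if i \<in> A then 1 / F A else 0)" and "A \<noteq> {}"
    and g: "g \<in> submodular_polyhedron F" "0 \<le> g" "sum (($) g) A = F A" "0 < g $ i"
  shows "(1 - t) * \<bar>y $ i\<bar> + t * \<bar>z $ i\<bar> = \<bar>x $ i\<bar>"
proof -
  define m where "m = (1 - t) *\<^sub>R vabs y + t *\<^sub>R vabs z"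
  have m_ge: "\<bar>x $ k\<bar> \<le> m $ k" for k
  proof -
    have "\<bar>x $ k\<bar> \<le> \<bar>(1 - t) * y $ k\<bar> + \<bar>t * z $ k\<bar>"
      unfolding x by (simp add: abs_triangle_ineq)
    then show ?thesis using t by (simp add: m_def abs_mult)
  qed
  have "g \<bullet> m = (1 - t) * (g \<bullet> vabs y) + t * (g \<bullet> vabs z)"
    by (simp add: m_def inner_add_right)
  also have "\<dots> \<le> (1 - t) * 1 + t * 1"
    using inner_vabs_le_one[OF y g(1)] inner_vabs_le_one[OF z g(1)] t
    by (intro add_mono mult_left_mono) simp_all
  also have "\<dots> = g \<bullet> vabs x"
    using inner_vabs_indicator[OF absx] g(3) pos[OF \<open>A \<noteq> {}\<close>] by simp
  finally have "g \<bullet> (m - vabs x) \<le> 0" by (simp add: inner_diff_right)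
  moreover have "g \<bullet> (m - vabs x) = (\<Sum>k\<in>UNIV. g $ k * (m $ k - \<bar>x $ k\<bar>))"
    by (simp add: inner_vec_def)
  moreover have nonneg: "\<forall>k\<in>UNIV. 0 \<le> g $ k * (m $ k - \<bar>x $ k\<bar>)"
    using g(2) m_ge by (simp add: less_eq_vec_def)
  moreover have "0 \<le> (\<Sum>k\<in>UNIV. g $ k * (m $ k - \<bar>x $ k\<bar>))"
    using nonneg by (intro sum_nonneg) simp
  ultimately have "(\<Sum>k\<in>UNIV. g $ k * (m $ k - \<bar>x $ k\<bar>)) = 0" by linarith
  then have "g $ i * (m $ i - \<bar>x $ i\<bar>) = 0"
    using sum_nonneg_eq_0_iff[of UNIV "\<lambda>k. g $ k * (m $ k - \<bar>x $ k\<bar>)"] nonneg by simp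
  then show ?thesis using g(4) by (simp add: m_def)
qed

lemma convex_combination_inner_vabs_eq_one:
  assumes y: "y \<in> unit_ball" and z: "z \<in> unit_ball" and t: "0 < t" "t < 1"
    and "vabs x = (1 - t) *\<^sub>R vabs y + t *\<^sub>R vabs z"
    and absx: "\<And>i. \<bar>x $ i\<bar> = (if i \<in> A then 1 / F A else 0)" and "A \<noteq> {}"
    and g: "g \<in> submodular_polyhedron F" "sum (($) g) A = F A"
  shows "g \<bullet> vabs y = 1" "g \<bullet> vabs z = 1"
proof -
  have "(1 - t) * (g \<bullet> vabs y) + t * (g \<bullet> vabs z) = 1"
    using assms(5) inner_vabs_indicator[OF absx, of g] g(2) pos[OF \<open>A \<noteq> {}\<close>]
    by (simp add: inner_add_right)
  then have "(1 - t) * (1 - g \<bullet> vabs y) + t * (1 - g \<bullet> vabs z) = 0"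
    by (simp add: algebra_simps)
  moreover have "0 \<le> (1 - t) * (1 - g \<bullet> vabs y)" "0 \<le> t * (1 - g \<bullet> vabs z)"
    using inner_vabs_le_one[OF y g(1)] inner_vabs_le_one[OF z g(1)] t by simp_all
  ultimately have "(1 - t) * (1 - g \<bullet> vabs y) = 0" "t * (1 - g \<bullet> vabs z) = 0" by linarith+
  then show "g \<bullet> vabs y = 1" "g \<bullet> vabs z = 1" using t by simp_all
qed

lemma stable_inseparable_convex_combination_eq:
  assumes stable: "stable_set F A" and inseparable: "inseparable_set F A"
    and absx: "\<And>i. \<bar>x $ i\<bar> = (if i \<in> A then 1 / F A else 0)"
    and y: "y \<in> unit_ball" and z: "z \<in> unit_ball" and t: "0 < t" "t < 1"
    and x: "x = (1 - t) *\<^sub>R y + t *\<^sub>R z"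
  shows "y = z"
proof -
  have "A \<noteq> {}" using inseparable by (simp add: inseparable_set_def)
  have tight: "(1 - t) * \<bar>y $ i\<bar> + t * \<bar>z $ i\<bar> = \<bar>x $ i\<bar>" for i
  proof -
    obtain g where "g \<in> submodular_polyhedron F" "0 \<le> g" "sum (($) g) A = F A" "0 < g $ i"
      by (rule stable_set_tight_certificate[OF stable])
    then show ?thesis
      using convex_combination_abs_eq[OF y z _ _ x absx \<open>A \<noteq> {}\<close>] t by simp
  qed
  then have "vabs x = (1 - t) *\<^sub>R vabs y + t *\<^sub>R vabs z" by (simp add: vec_eq_iff)
  note inner_one = convex_combination_inner_vabs_eq_one[OF y z t this absx \<open>A \<noteq> {}\<close>]
  have outside: "y $ i = 0" "z $ i = 0" if "i \<notin> A" for i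
    using tight[of i] absx[of i] that t by (simp_all add: add_nonneg_eq_0_iff)
  then have "\<bar>y $ i\<bar> = 1 / F A" "\<bar>z $ i\<bar> = 1 / F A" if "i \<in> A" for i
    using inseparable_set_tight_imp_const[OF submodular empty inseparable, of "vabs y" i]
      inseparable_set_tight_imp_const[OF submodular empty inseparable, of "vabs z" i] inner_one that
    by simp_all
  then have "y $ i = z $ i" for i
    using abs_convex_combination_eq_imp_eq[OF t, of "y $ i" "z $ i"] tight[of i] absx[of i] x outside
    by (cases "i \<in> A") auto
  then show "y = z" by (simp add: vec_eq_iff)
qed

lemma normalized_sign_vector_extreme_point:
  assumes s: "\<forall>i. s $ i \<in> {-1, 0, 1}" and A: "supp s = A"
    and stable: "stable_set F A" and inseparable: "inseparable_set F A"
  shows "((1 / F A) *\<^sub>R s) extreme_point_of unit_ball"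
proof -
  have "A \<noteq> {}" using inseparable by (simp add: inseparable_set_def)
  then have "0 < F A" by (rule pos)
  have absx: "\<bar>((1 / F A) *\<^sub>R s) $ i\<bar> = (if i \<in> A then 1 / F A else 0)" for i
    using s[rule_format, of i] \<open>0 < F A\<close> A by (auto simp: supp_def abs_mult)
  have "lovasz_ext F (vabs ((1 / F A) *\<^sub>R s)) = 1"
    using lovasz_ext_vabs_indicator[OF _ absx] \<open>0 < F A\<close> by simp
  then show ?thesis
    using stable_inseparable_convex_combination_eq[OF stable inseparable absx]
    unfolding extreme_point_of_def in_segment by fastforce
qed

end

theorem proposition2:
  fixes F :: "'n::finite set \<Rightarrow> real" and x :: "real^'n"
  assumes "submodular F"
    and "nondecreasing_setfun F"
    and "F {} = 0"
    and "\<And>k. F {k} > 0"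
  shows "x extreme_point_of {w. lovasz_ext F (vabs w) \<le> 1} \<longleftrightarrow>
    (\<exists>s A. (\<forall>i. s $ i \<in> {-1, 0, 1}) \<and> supp s = A \<and>
       stable_set F A \<and> inseparable_set F A \<and> x = (1 / F A) *\<^sub>R s)"
proof -
  interpret submodular_norm F
    using assms by unfold_locales
  show ?thesis
    using extreme_point_imp_normalized_sign_vector normalized_sign_vector_extreme_point by blast
qed

end
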